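(* Let $K$ be a finite field, $G$ a finite group, $\ell\ge 1$ an integer, $n=\ell|G|$, and let $\mathcal{C}\subseteq K^n$ be a $K$-linear code. Then $\mathcal{C}$ is a quasi-$G$ code of index $\ell$ if and only if $G$ is isomorphic to a subgroup $H$ of $\mathrm{PAut}(\mathcal{C})$ which acts freely on the coordinate set $\{1,\ldots,n\}$ with exactly $\ell$ orbits (i.e. of index $\ell$).
   Context: For a finite group $G$ with a fixed ordering $g_1,\ldots,g_m$ of its elements ($m=|G|$), the group algebra $KG$ is identified with $K^m$ via the $K$-linear isomorphism $\varphi:\sum_i a_ig_i\mapsto(a_1,\ldots,a_m)$; then $KG^\ell=KG\oplus\cdots\oplus KG$ ($\ell$ copies) is identified with $K^{m\ell}$ via $\varphi^\ell$. A $K$-linear code $\mathcal{C}\subseteq K^{n}$, $n=\ell|G|$, is called a quasi-$G$ code of index $\ell$ if, for some bijection between the coordinate set $\{1,\ldots,n\}$ and $\{1,\ldots,\ell\}\times G$ (equivalently, for some such identification $K^n\cong KG^\ell$), $\mathcal{C}$ corresponds to a right $KG$-submodule of $KG^\ell$. The symmetric group $S_n$ acts on $K^n$ by $v^\sigma=(v_{\sigma^{-1}(1)},\ldots,v_{\sigma^{-1}(n)})$, and $\mathrm{PAut}(\mathcal{C})=\{\sigma\in S_n : \mathcal{C}^\sigma=\mathcal{C}\}$ is the permutation automorphism group of $\mathcal{C}$. An action is free if no non-identity element fixes any point; for a free action of a finite group $H$ on an $n$-element set, all orbits have size $|H|$ and the index is $n/|H|$. *)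

theory Defs
  imports "HOL-Algebra.Sym_Groups" "HOL-Algebra.Group"
begin

text \<open>Vectors of K^n: functions on coordinates {1..n}, zero outside.\<close>
definition vecs :: "nat \<Rightarrow> (nat \<Rightarrow> 'k::field) set" where
  "vecs n = {v. \<forall>i. i \<notin> {1..n} \<longrightarrow> v i = 0}"

definition linear_code :: "nat \<Rightarrow> (nat \<Rightarrow> 'k::field) set \<Rightarrow> bool" where
  "linear_code n C \<longleftrightarrow> C \<subseteq> vecs n \<and> (\<lambda>_. 0) \<in> C
     \<and> (\<forall>u\<in>C. \<forall>v\<in>C. (\<lambda>i. u i + v i) \<in> C)
     \<and> (\<forall>a. \<forall>v\<in>C. (\<lambda>i. a * v i) \<in> C)"

definition perm_vec :: "(nat \<Rightarrow> 'k) \<Rightarrow> (nat \<Rightarrow> nat) \<Rightarrow> (nat \<Rightarrow> 'k)" where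
  "perm_vec v \<sigma> = (\<lambda>i. v (Hilbert_Choice.inv \<sigma> i))"

definition PAut :: "nat \<Rightarrow> (nat \<Rightarrow> 'k) set \<Rightarrow> (nat \<Rightarrow> nat) set" where
  "PAut n C = {\<sigma>. \<sigma> permutes {1..n} \<and> (\<lambda>v. perm_vec v \<sigma>) ` C = C}"

text \<open>KG^l identified with functions on {1..l} x G (extensional).  Elements of KG are
  functions a : G -> K (coefficients).  Right multiplication of u in KG^l by a in KG:
  (sum_y u_y y)(sum_h a_h h) has coefficient sum_h u_{x h^-1} a_h at x.\<close>
definition KG_dom :: "('g, 'm) monoid_scheme \<Rightarrow> nat \<Rightarrow> (nat \<times> 'g) set" where
  "KG_dom G l = {1..l} \<times> carrier G"

definition KGl :: "('g, 'm) monoid_scheme \<Rightarrow> nat \<Rightarrow> (nat \<times> 'g \<Rightarrow> 'k::field) set" where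
  "KGl G l = extensional (KG_dom G l)"

definition KG_rmult :: "('g, 'm) monoid_scheme \<Rightarrow> nat \<Rightarrow> (nat \<times> 'g \<Rightarrow> 'k::field)
     \<Rightarrow> ('g \<Rightarrow> 'k) \<Rightarrow> (nat \<times> 'g \<Rightarrow> 'k)" where
  "KG_rmult G l u a = restrict (\<lambda>(i, x). \<Sum>h\<in>carrier G. u (i, x \<otimes>\<^bsub>G\<^esub> inv\<^bsub>G\<^esub> h) * a h)
      (KG_dom G l)"

definition right_KG_submodule :: "('g, 'm) monoid_scheme \<Rightarrow> nat \<Rightarrow> (nat \<times> 'g \<Rightarrow> 'k::field) set \<Rightarrow> bool" where
  "right_KG_submodule G l M \<longleftrightarrow> M \<subseteq> KGl G l
     \<and> restrict (\<lambda>_. 0) (KG_dom G l) \<in> M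
     \<and> (\<forall>u\<in>M. \<forall>v\<in>M. restrict (\<lambda>p. u p + v p) (KG_dom G l) \<in> M)
     \<and> (\<forall>u\<in>M. restrict (\<lambda>p. - u p) (KG_dom G l) \<in> M)
     \<and> (\<forall>u\<in>M. \<forall>a. KG_rmult G l u a \<in> M)"

definition quasi_G_code :: "('g, 'm) monoid_scheme \<Rightarrow> nat \<Rightarrow> (nat \<Rightarrow> 'k::field) set \<Rightarrow> bool" where
  "quasi_G_code G l C \<longleftrightarrow> (\<exists>\<beta>. bij_betw \<beta> (KG_dom G l) {1..l * order G}
     \<and> right_KG_submodule G l ((\<lambda>v. restrict (\<lambda>p. v (\<beta> p)) (KG_dom G l)) ` C))"

definition acts_freely :: "(nat \<Rightarrow> nat) set \<Rightarrow> nat \<Rightarrow> bool" where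
  "acts_freely H n \<longleftrightarrow> (\<forall>\<sigma>\<in>H. \<forall>i\<in>{1..n}. \<sigma> i = i \<longrightarrow> \<sigma> = id)"

definition perm_orbits :: "(nat \<Rightarrow> nat) set \<Rightarrow> nat \<Rightarrow> nat set set" where
  "perm_orbits H n = (\<lambda>i. (\<lambda>\<sigma>. \<sigma> i) ` H) ` {1..n}"

end

theory Submission
  imports Defs
begin

text \<open>
  Label the coordinates {1..n} by {1..l} \<times> G through a bijection \<beta>. Right multiplication
  by a group element h then becomes the coordinate permutation \<beta>(i, x) \<mapsto> \<beta>(i, x h), and
  right multiplication by an arbitrary element of KG is a linear combination of these
  permutations. Hence the relabelled code is a right KG-submodule iff it is invariant under
  all these shifts, and the shifts form a copy of G in S_n that acts freely with the l orbits
  \<beta>({i} \<times> G). Conversely, if a copy of G acts freely with l orbits, choosing one point r_i in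
  each orbit and putting \<beta>(i, x) = x\<inverse> r_i gives a labelling under which that action is
  exactly the shift action.
\<close>

lemma linear_code_sum:
  assumes "linear_code n C" "finite A" "\<And>a. a \<in> A \<Longrightarrow> f a \<in> C"
  shows "(\<lambda>i. \<Sum>a\<in>A. f a i) \<in> C"
  using assms(2,3)
proof (induction A rule: finite_induct)
  case empty
  then show ?case using assms(1) by (simp add: linear_code_def)
next
  case (insert x F)
  then have "(\<lambda>i. f x i + (\<Sum>a\<in>F. f a i)) \<in> C"
    using assms(1) unfolding linear_code_def by simp
  then show ?case using insert.hyps by simp
qed

lemma perm_vec_vecs:
  assumes "\<sigma> permutes {1..n}" and "v \<in> vecs n"
  shows "perm_vec v \<sigma> \<in> vecs n"
  using assms permutes_not_in[OF permutes_inv] unfolding vecs_def perm_vec_def by fastforce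

lemma perm_vec_perm_vec_inv: "\<sigma> permutes S \<Longrightarrow> perm_vec (perm_vec v (inv' \<sigma>)) \<sigma> = v"
  by (simp add: perm_vec_def permutes_inv_inv permutes_inverses)

lemma PAutI:
  assumes "\<sigma> permutes {1..n}"
    and "\<And>v. v \<in> C \<Longrightarrow> perm_vec v \<sigma> \<in> C" and "\<And>v. v \<in> C \<Longrightarrow> perm_vec v (inv' \<sigma>) \<in> C"
  shows "\<sigma> \<in> PAut n C"
proof -
  have "C \<subseteq> (\<lambda>v. perm_vec v \<sigma>) ` C"
    using assms(3) perm_vec_perm_vec_inv[OF assms(1)] by (metis image_eqI subsetI)
  then show ?thesis using assms(1,2) unfolding PAut_def by blast
qed

lemma PAutD: "\<sigma> \<in> PAut n C \<Longrightarrow> v \<in> C \<Longrightarrow> perm_vec v \<sigma> \<in> C"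
  unfolding PAut_def by blast

lemma sym_subgroup_orbit_eq:
  assumes H: "subgroup H (sym_group n)" and \<sigma>: "\<sigma> \<in> H"
  shows "(\<lambda>\<tau>. \<tau> (\<sigma> j)) ` H = (\<lambda>\<tau>. \<tau> j) ` H"
proof
  show "(\<lambda>\<tau>. \<tau> (\<sigma> j)) ` H \<subseteq> (\<lambda>\<tau>. \<tau> j) ` H"
  proof
    fix k assume "k \<in> (\<lambda>\<tau>. \<tau> (\<sigma> j)) ` H"
    then obtain \<tau> where "\<tau> \<in> H" "k = (\<tau> \<circ> \<sigma>) j" by auto
    moreover have "\<tau> \<circ> \<sigma> \<in> H"
      using subgroup.m_closed[OF H \<open>\<tau> \<in> H\<close> \<sigma>] by (simp add: sym_group_mult)
    ultimately show "k \<in> (\<lambda>\<tau>. \<tau> j) ` H" by blast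
  qed
  have \<sigma>_perm: "\<sigma> permutes {1..n}"
    using subgroup.subset[OF H] \<sigma> by (auto simp: sym_group_carrier)
  have "inv' \<sigma> \<in> H"
    using subgroup.m_inv_closed[OF H \<sigma>] subgroup.subset[OF H] \<sigma> by auto
  then have closed: "\<And>\<tau>. \<tau> \<in> H \<Longrightarrow> \<tau> \<circ> inv' \<sigma> \<in> H"
    using subgroup.m_closed[OF H] by (simp add: sym_group_mult)
  show "(\<lambda>\<tau>. \<tau> j) ` H \<subseteq> (\<lambda>\<tau>. \<tau> (\<sigma> j)) ` H"
  proof
    fix k assume "k \<in> (\<lambda>\<tau>. \<tau> j) ` H"
    then obtain \<tau> where "\<tau> \<in> H" "k = (\<tau> \<circ> inv' \<sigma>) (\<sigma> j)"
      using permutes_inverses(2)[OF \<sigma>_perm] by auto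
    with closed show "k \<in> (\<lambda>\<tau>. \<tau> (\<sigma> j)) ` H" by blast
  qed
qed

lemma orbit_representatives:
  assumes "card (perm_orbits H n) = l"
  obtains r where "\<And>i. i \<in> {1..l} \<Longrightarrow> r i \<in> {1..n}"
    and "inj_on (\<lambda>i. (\<lambda>\<sigma>. \<sigma> (r i)) ` H) {1..l}"
proof -
  have "finite (perm_orbits H n)" by (simp add: perm_orbits_def)
  then obtain e where e: "bij_betw e {1..l} (perm_orbits H n)"
    using assms ex_bij_betw_nat_finite_1 by blast
  then have "\<forall>i\<in>{1..l}. \<exists>j\<in>{1..n}. e i = (\<lambda>\<sigma>. \<sigma> j) ` H"
    unfolding bij_betw_def perm_orbits_def by blast
  then obtain r where r: "\<And>i. i \<in> {1..l} \<Longrightarrow> r i \<in> {1..n} \<and> e i = (\<lambda>\<sigma>. \<sigma> (r i)) ` H"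
    by metis
  have "inj_on (\<lambda>i. (\<lambda>\<sigma>. \<sigma> (r i)) ` H) {1..l}"
    using e r unfolding bij_betw_def by (metis (mono_tags, lifting) inj_on_cong)
  with r that show thesis by blast
qed

lemma KG_dom_iff [simp]: "(i, x) \<in> KG_dom G l \<longleftrightarrow> i \<in> {1..l} \<and> x \<in> carrier G"
  by (simp add: KG_dom_def)

locale coordinate_labelling = group G for G :: "('g, 'm) monoid_scheme" (structure) +
  fixes l n :: nat and \<beta> :: "nat \<times> 'g \<Rightarrow> nat"
  assumes finite_carrier: "finite (carrier G)"
    and bij_labelling: "bij_betw \<beta> (KG_dom G l) {1..n}"
begin

definition shift :: "'g \<Rightarrow> nat \<Rightarrow> nat" where
  "shift h j = (if j \<in> {1..n}
     then \<beta> (fst (inv_into (KG_dom G l) \<beta> j), snd (inv_into (KG_dom G l) \<beta> j) \<otimes> h) else j)"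

definition relabel :: "(nat \<Rightarrow> 'k) \<Rightarrow> nat \<times> 'g \<Rightarrow> 'k" where
  "relabel v = restrict (\<lambda>p. v (\<beta> p)) (KG_dom G l)"

lemma label_in: "i \<in> {1..l} \<Longrightarrow> x \<in> carrier G \<Longrightarrow> \<beta> (i, x) \<in> {1..n}"
  using bij_labelling by (auto simp: bij_betw_def)

lemma label_eq_iff:
  "\<lbrakk>i \<in> {1..l}; x \<in> carrier G; i' \<in> {1..l}; y \<in> carrier G\<rbrakk>
     \<Longrightarrow> \<beta> (i, x) = \<beta> (i', y) \<longleftrightarrow> i = i' \<and> x = y"
  using bij_labelling unfolding bij_betw_def inj_on_def by (metis KG_dom_iff prod.inject)

lemma labelE:
  assumes "j \<in> {1..n}"
  obtains i x where "i \<in> {1..l}" "x \<in> carrier G" "j = \<beta> (i, x)"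
proof -
  have "inv_into (KG_dom G l) \<beta> j \<in> KG_dom G l" "\<beta> (inv_into (KG_dom G l) \<beta> j) = j"
    using bij_labelling assms
    by (auto intro: bij_betw_inv_into_right inv_into_into simp: bij_betw_def)
  then show ?thesis using that by (metis KG_dom_iff prod.collapse)
qed

lemma label_cases:
  obtains (label) i x where "i \<in> {1..l}" "x \<in> carrier G" "j = \<beta> (i, x)" | (outside) "j \<notin> {1..n}"
  using labelE by blast

lemma shift_label [simp]:
  "i \<in> {1..l} \<Longrightarrow> x \<in> carrier G \<Longrightarrow> shift h (\<beta> (i, x)) = \<beta> (i, x \<otimes> h)"
  using bij_labelling label_in by (simp add: shift_def bij_betw_inv_into_left)

lemma shift_outside: "j \<notin> {1..n} \<Longrightarrow> shift h j = j"
  unfolding shift_def by argo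

lemma shift_mult: "h \<in> carrier G \<Longrightarrow> k \<in> carrier G \<Longrightarrow> shift k (shift h j) = shift (h \<otimes> k) j"
  by (cases j rule: label_cases) (simp_all add: shift_outside m_assoc)

lemma shift_one: "shift \<one> = id"
proof
  fix j show "shift \<one> j = id j"
    by (cases j rule: label_cases) (simp_all add: shift_outside)
qed

lemma shift_inverse:
  "h \<in> carrier G \<Longrightarrow> shift (inv h) (shift h j) = j"
  "h \<in> carrier G \<Longrightarrow> shift h (shift (inv h) j) = j"
  by (simp_all add: shift_mult shift_one)

lemma shift_in: "h \<in> carrier G \<Longrightarrow> j \<in> {1..n} \<Longrightarrow> shift h j \<in> {1..n}"
  by (cases j rule: label_cases) (metis m_closed shift_label label_in)+

lemma shift_permutes: "h \<in> carrier G \<Longrightarrow> shift h permutes {1..n}"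
  by (intro bij_imp_permutes bij_betwI[where g = "shift (inv h)"] Pi_I shift_in)
     (simp_all add: shift_inverse shift_outside)

lemma inv_shift: "h \<in> carrier G \<Longrightarrow> inv' (shift h) = shift (inv h)"
  by (rule inv_unique_comp) (auto simp: fun_eq_iff shift_inverse)

lemma shift_unique:
  assumes "\<sigma> permutes {1..n}" and "h \<in> carrier G"
    and "\<And>i x. i \<in> {1..l} \<Longrightarrow> x \<in> carrier G \<Longrightarrow> \<sigma> (\<beta> (i, x)) = \<beta> (i, x \<otimes> h)"
  shows "\<sigma> = shift h"
proof
  fix j show "\<sigma> j = shift h j"
    using assms by (cases j rule: label_cases) (simp_all add: shift_outside permutes_not_in)
qed

text \<open>By shift_mult the map h \<mapsto> shift h reverses products, hence the inversion.\<close>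
definition shift_group :: "(nat \<Rightarrow> nat) set" where
  "shift_group = (\<lambda>g. shift (inv g)) ` carrier G"

lemma shift_inv_hom: "(\<lambda>g. shift (inv g)) \<in> hom G (sym_group n)"
proof (rule homI)
  fix x assume "x \<in> carrier G"
  then show "shift (inv x) \<in> carrier (sym_group n)"
    unfolding sym_group_carrier by (intro shift_permutes inv_closed)
next
  fix x y assume "x \<in> carrier G" "y \<in> carrier G"
  then show "shift (inv (x \<otimes> y)) = shift (inv x) \<otimes>\<^bsub>sym_group n\<^esub> shift (inv y)"
    by (simp add: sym_group_mult inv_mult_group shift_mult fun_eq_iff)
qed

lemma shift_inv_inj:
  assumes "l \<ge> 1"
  shows "inj_on (\<lambda>g. shift (inv g)) (carrier G)"
proof
  fix x y assume x: "x \<in> carrier G" and y: "y \<in> carrier G"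
    and eq: "shift (inv x) = shift (inv y)"
  have "\<beta> (1, inv x) = \<beta> (1, inv y)"
    using fun_cong[OF eq, of "\<beta> (1, \<one>)"] assms x y by simp
  then have "inv x = inv y" using assms x y by (simp add: label_eq_iff)
  then show "x = y" using x y by (metis inv_inv)
qed

lemma subgroup_shift_group: "subgroup shift_group (sym_group n)"
  unfolding shift_group_def using shift_inv_hom
  by (intro group_hom.img_is_subgroup)
     (simp add: group_hom_def group_hom_axioms_def sym_group_is_group is_group)

lemma iso_shift_group: "l \<ge> 1 \<Longrightarrow> G \<cong> (sym_group n)\<lparr>carrier := shift_group\<rparr>"
proof (rule is_isoI)
  assume "l \<ge> 1"
  then show "(\<lambda>g. shift (inv g)) \<in> iso G ((sym_group n)\<lparr>carrier := shift_group\<rparr>)"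
    using shift_inv_hom shift_inv_inj unfolding iso_iff shift_group_def by (auto simp: hom_def)
qed

lemma acts_freely_shift_group: "acts_freely shift_group n"
  unfolding acts_freely_def shift_group_def
proof (intro ballI impI)
  fix \<sigma> j assume "\<sigma> \<in> (\<lambda>g. shift (inv g)) ` carrier G" and j: "j \<in> {1..n}" and fixed: "\<sigma> j = j"
  then obtain g where g: "g \<in> carrier G" and \<sigma>: "\<sigma> = shift (inv g)" by blast
  obtain i x where ix: "i \<in> {1..l}" "x \<in> carrier G" "j = \<beta> (i, x)" using labelE[OF j] .
  have "x \<otimes> inv g = x"
    using fixed g ix by (simp add: \<sigma> label_eq_iff)
  then have "inv g = \<one>" using g ix(2) by (simp add: l_cancel_one)
  then show "\<sigma> = id" by (simp add: \<sigma> shift_one)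
qed

lemma shift_group_orbit:
  assumes i: "i \<in> {1..l}" and x: "x \<in> carrier G"
  shows "(\<lambda>\<sigma>. \<sigma> (\<beta> (i, x))) ` shift_group = \<beta> ` ({i} \<times> carrier G)"
proof
  show "(\<lambda>\<sigma>. \<sigma> (\<beta> (i, x))) ` shift_group \<subseteq> \<beta> ` ({i} \<times> carrier G)"
    using assms by (auto simp: shift_group_def)
  show "\<beta> ` ({i} \<times> carrier G) \<subseteq> (\<lambda>\<sigma>. \<sigma> (\<beta> (i, x))) ` shift_group"
  proof
    fix j assume "j \<in> \<beta> ` ({i} \<times> carrier G)"
    then obtain y where y: "y \<in> carrier G" "j = \<beta> (i, y)" by auto
    have "shift (inv x \<otimes> y) (\<beta> (i, x)) = j"
      using i x y by (simp add: m_assoc[symmetric])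
    moreover have "shift (inv x \<otimes> y) \<in> shift_group"
      using x y unfolding shift_group_def by (metis image_eqI inv_closed inv_inv m_closed)
    ultimately show "j \<in> (\<lambda>\<sigma>. \<sigma> (\<beta> (i, x))) ` shift_group" by blast
  qed
qed

lemma card_orbits_shift_group: "card (perm_orbits shift_group n) = l"
proof -
  have "perm_orbits shift_group n = (\<lambda>i. \<beta> ` ({i} \<times> carrier G)) ` {1..l}"
  proof -
    have "\<beta> ` KG_dom G l = {1..n}" using bij_labelling by (simp add: bij_betw_def)
    have "fst ` ({1..l} \<times> carrier G) = {1..l}"
      using one_closed by force
    have "perm_orbits shift_group n = (\<lambda>p. (\<lambda>\<sigma>. \<sigma> (\<beta> p)) ` shift_group) ` KG_dom G l"
      unfolding perm_orbits_def by (simp only: image_image flip: \<open>\<beta> ` KG_dom G l = {1..n}\<close>)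
    also have "\<dots> = (\<lambda>i. \<beta> ` ({i} \<times> carrier G)) ` fst ` ({1..l} \<times> carrier G)"
      unfolding image_image by (rule image_cong) (simp_all add: KG_dom_def split_paired_all shift_group_orbit)
    finally show ?thesis
      unfolding \<open>fst ` ({1..l} \<times> carrier G) = {1..l}\<close> .
  qed
  moreover have "inj_on (\<lambda>i. \<beta> ` ({i} \<times> carrier G)) {1..l}"
  proof
    fix i i' assume i: "i \<in> {1..l}" and i': "i' \<in> {1..l}"
      and eq: "\<beta> ` ({i} \<times> carrier G) = \<beta> ` ({i'} \<times> carrier G)"
    have "\<beta> (i, \<one>) \<in> \<beta> ` ({i'} \<times> carrier G)"
      unfolding eq[symmetric] by blast
    then obtain y where "y \<in> carrier G" "\<beta> (i, \<one>) = \<beta> (i', y)" by blast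
    then show "i = i'" using i i' by (simp add: label_eq_iff)
  qed
  ultimately show ?thesis by (simp add: card_image)
qed

lemma relabel_inj:
  assumes "v \<in> vecs n" and "w \<in> vecs n" and eq: "relabel v = relabel w"
  shows "v = w"
proof
  fix j show "v j = w j"
  proof (cases j rule: label_cases)
    case (label i x)
    then show ?thesis using fun_cong[OF eq, of "(i, x)"] by (simp add: relabel_def)
  next
    case outside
    then show ?thesis using assms(1,2) by (simp add: vecs_def)
  qed
qed

lemma KG_rmult_relabel:
  "KG_rmult G l (relabel v) a = relabel (\<lambda>j. \<Sum>h\<in>carrier G. a h * perm_vec v (shift h) j)"
proof
  fix p :: "nat \<times> 'g"
  show "KG_rmult G l (relabel v) a p = relabel (\<lambda>j. \<Sum>h\<in>carrier G. a h * perm_vec v (shift h) j) p"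
  proof (cases "p \<in> KG_dom G l")
    case True
    then obtain i x where p: "p = (i, x)" "i \<in> {1..l}" "x \<in> carrier G" by (cases p) auto
    have "KG_rmult G l (relabel v) a p = (\<Sum>h\<in>carrier G. relabel v (i, x \<otimes> inv h) * a h)"
      using p by (simp add: KG_rmult_def)
    also have "\<dots> = (\<Sum>h\<in>carrier G. a h * perm_vec v (shift h) (\<beta> (i, x)))"
      using p by (intro sum.cong) (simp_all add: relabel_def perm_vec_def inv_shift)
    finally show ?thesis using p by (simp add: relabel_def)
  qed (simp add: KG_rmult_def relabel_def)
qed

lemma KG_rmult_relabel_unit:
  assumes "h \<in> carrier G"
  shows "KG_rmult G l (relabel v) (\<lambda>k. if k = h then 1 else 0) = relabel (perm_vec v (shift h))"
proof -
  have "(\<Sum>k\<in>carrier G. (if k = h then 1 else 0) * perm_vec v (shift k) j) = perm_vec v (shift h) j"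
    for j
    using assms finite_carrier by (simp add: if_distrib[of "\<lambda>c. c * _"] sum.delta' cong: if_cong)
  then show ?thesis by (simp add: KG_rmult_relabel)
qed

lemma submodule_iff_shift_invariant:
  assumes C: "linear_code n C"
  shows "right_KG_submodule G l (relabel ` C) \<longleftrightarrow> (\<forall>h\<in>carrier G. \<forall>v\<in>C. perm_vec v (shift h) \<in> C)"
proof
  assume "right_KG_submodule G l (relabel ` C)"
  then have closed: "\<And>u a. u \<in> relabel ` C \<Longrightarrow> KG_rmult G l u a \<in> relabel ` C"
    unfolding right_KG_submodule_def by blast
  have vecs: "C \<subseteq> vecs n" using C unfolding linear_code_def by blast
  show "\<forall>h\<in>carrier G. \<forall>v\<in>C. perm_vec v (shift h) \<in> C"
  proof (intro ballI)
    fix h v assume h: "h \<in> carrier G" and v: "v \<in> C"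
    have "relabel (perm_vec v (shift h)) \<in> relabel ` C"
      using closed[of "relabel v" "\<lambda>k. if k = h then 1 else 0"] v
      unfolding KG_rmult_relabel_unit[OF h] by blast
    then obtain w where w: "w \<in> C" "relabel (perm_vec v (shift h)) = relabel w" by auto
    have "v \<in> vecs n" "w \<in> vecs n" using vecs v w(1) by blast+
    then have "perm_vec v (shift h) = w"
      using w(2) h by (intro relabel_inj perm_vec_vecs shift_permutes)
    then show "perm_vec v (shift h) \<in> C" using w(1) by simp
  qed
next
  assume shift_inv: "\<forall>h\<in>carrier G. \<forall>v\<in>C. perm_vec v (shift h) \<in> C"
  have add: "\<And>u w. u \<in> C \<Longrightarrow> w \<in> C \<Longrightarrow> (\<lambda>j. u j + w j) \<in> C"
    and smult: "\<And>a u. u \<in> C \<Longrightarrow> (\<lambda>j. a * u j) \<in> C"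
    using C unfolding linear_code_def by blast+
  show "right_KG_submodule G l (relabel ` C)"
    unfolding right_KG_submodule_def
  proof (intro conjI ballI allI)
    show "relabel ` C \<subseteq> KGl G l" by (auto simp: relabel_def KGl_def)
    have "restrict (\<lambda>_. 0) (KG_dom G l) = relabel (\<lambda>_. 0)" by (simp add: relabel_def)
    then show "restrict (\<lambda>_. 0) (KG_dom G l) \<in> relabel ` C"
      using C unfolding linear_code_def by blast
  next
    fix u w assume "u \<in> relabel ` C" "w \<in> relabel ` C"
    then obtain u' w' where "u' \<in> C" "w' \<in> C" "u = relabel u'" "w = relabel w'" by blast
    moreover have "restrict (\<lambda>p. relabel u' p + relabel w' p) (KG_dom G l) = relabel (\<lambda>j. u' j + w' j)"
      by (simp add: relabel_def fun_eq_iff)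
    ultimately show "restrict (\<lambda>p. u p + w p) (KG_dom G l) \<in> relabel ` C"
      using add by (metis image_eqI)
  next
    fix u assume "u \<in> relabel ` C"
    then obtain u' where "u' \<in> C" "u = relabel u'" by blast
    moreover have "restrict (\<lambda>p. - relabel u' p) (KG_dom G l) = relabel (\<lambda>j. (- 1) * u' j)"
      by (simp add: relabel_def fun_eq_iff)
    ultimately show "restrict (\<lambda>p. - u p) (KG_dom G l) \<in> relabel ` C"
      using smult by (metis image_eqI)
  next
    fix u a assume "u \<in> relabel ` C"
    then obtain v where "v \<in> C" "u = relabel v" by blast
    moreover have "(\<lambda>j. \<Sum>h\<in>carrier G. a h * perm_vec v (shift h) j) \<in> C"
      using \<open>v \<in> C\<close> shift_inv by (intro linear_code_sum[OF C finite_carrier] smult) auto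
    ultimately show "KG_rmult G l u a \<in> relabel ` C"
      by (simp add: KG_rmult_relabel)
  qed
qed

lemma quasi_G_code_if_shift_invariant:
  assumes "n = l * order G" and "linear_code n C"
    and "\<forall>h\<in>carrier G. \<forall>v\<in>C. perm_vec v (shift h) \<in> C"
  shows "quasi_G_code G l C"
  using assms bij_labelling submodule_iff_shift_invariant[OF assms(2)]
  unfolding quasi_G_code_def relabel_def[abs_def] by blast

lemma shift_group_PAut:
  "\<forall>h\<in>carrier G. \<forall>v\<in>C. perm_vec v (shift h) \<in> C \<Longrightarrow> shift_group \<subseteq> PAut n C"
  unfolding shift_group_def by (auto intro!: PAutI shift_permutes simp: inv_shift)

end

lemma (in group) free_action_labelling:
  assumes fin: "finite (carrier G)" and n: "n = l * order G"
    and H: "subgroup H (sym_group n)" and \<phi>: "\<phi> \<in> iso G ((sym_group n)\<lparr>carrier := H\<rparr>)"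
    and free: "acts_freely H n" and orbits: "card (perm_orbits H n) = l"
  obtains \<beta> where "bij_betw \<beta> (KG_dom G l) {1..n}"
    and "\<And>h i x. \<lbrakk>h \<in> carrier G; i \<in> {1..l}; x \<in> carrier G\<rbrakk> \<Longrightarrow> \<phi> h (\<beta> (i, x)) = \<beta> (i, x \<otimes> inv h)"
proof -
  obtain r where r: "\<And>i. i \<in> {1..l} \<Longrightarrow> r i \<in> {1..n}"
    and r_inj: "inj_on (\<lambda>i. (\<lambda>\<sigma>. \<sigma> (r i)) ` H) {1..l}"
    using orbit_representatives[OF orbits] by blast
  have \<phi>_hom: "\<phi> \<in> hom G ((sym_group n)\<lparr>carrier := H\<rparr>)" and \<phi>_inj: "inj_on \<phi> (carrier G)"
    using \<phi> by (simp_all add: iso_iff)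
  have \<phi>_H: "\<phi> g \<in> H" if "g \<in> carrier G" for g
    using \<phi>_hom that by (auto simp: hom_def)
  have \<phi>_mult: "\<phi> (x \<otimes> y) = \<phi> x \<circ> \<phi> y" if "x \<in> carrier G" "y \<in> carrier G" for x y
    using \<phi>_hom that by (simp add: hom_def sym_group_mult)
  have \<phi>_one: "\<phi> \<one> = id"
    using hom_one[OF \<phi>_hom is_group subgroup.subgroup_is_group[OF H sym_group_is_group]]
    by (simp add: sym_group_one)
  define \<beta> where "\<beta> p = \<phi> (inv (snd p)) (r (fst p))" for p
  \<comment> \<open>Freeness makes \<beta> injective; counting then makes it onto.\<close>
  have equivariant: "\<phi> h (\<beta> (i, x)) = \<beta> (i, x \<otimes> inv h)"
    if "h \<in> carrier G" "x \<in> carrier G" for h i x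
    using that by (simp add: \<beta>_def inv_mult_group \<phi>_mult)
  have \<beta>_in: "\<beta> p \<in> {1..n}" if "p \<in> KG_dom G l" for p
  proof -
    obtain i x where "p = (i, x)" by (cases p)
    have "\<phi> (inv x) \<in> carrier (sym_group n)"
      using \<phi>_H subgroup.subset[OF H] that \<open>p = (i, x)\<close> by auto
    then have "\<phi> (inv x) permutes {1..n}"
      unfolding sym_group_carrier .
    moreover have "r i \<in> {1..n}" using r that \<open>p = (i, x)\<close> by simp
    ultimately show ?thesis
      unfolding \<beta>_def \<open>p = (i, x)\<close> fst_conv snd_conv by (rule permutes_in_image[THEN iffD2])
  qed
  have \<beta>_inj: "inj_on \<beta> (KG_dom G l)"
  proof (intro inj_onI, clarify)
    fix i x i' y assume ix: "(i, x) \<in> KG_dom G l" and iy: "(i', y) \<in> KG_dom G l"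
      and eq: "\<beta> (i, x) = \<beta> (i', y)"
    have orbit: "(\<lambda>\<sigma>. \<sigma> (\<beta> (k, z))) ` H = (\<lambda>\<sigma>. \<sigma> (r k)) ` H" if "z \<in> carrier G" for k z
      unfolding \<beta>_def using that by (simp add: sym_subgroup_orbit_eq[OF H \<phi>_H])
    have "i = i'"
      using inj_onD[OF r_inj] orbit eq ix iy by (metis KG_dom_iff)
    have "\<phi> (y \<otimes> inv x) (r i) = \<phi> y (\<beta> (i, x))"
      using ix iy by (simp add: \<beta>_def \<phi>_mult)
    also have "\<dots> = \<phi> y (\<beta> (i, y))"
      using eq \<open>i = i'\<close> by simp
    also have "\<dots> = r i"
      using \<phi>_mult[of y "inv y"] iy by (simp add: \<beta>_def \<phi>_one fun_eq_iff)
    finally have "\<phi> (y \<otimes> inv x) (r i) = r i" .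
    moreover have "\<phi> (y \<otimes> inv x) \<in> H" "r i \<in> {1..n}"
      using \<phi>_H r ix iy by simp_all
    ultimately have "\<phi> (y \<otimes> inv x) = \<phi> \<one>"
      using free unfolding acts_freely_def \<phi>_one by blast
    then have "y \<otimes> inv x = \<one>"
      using \<phi>_inj ix iy by (simp add: inj_on_def)
    then show "i = i' \<and> x = y"
      using \<open>i = i'\<close> ix iy by (metis KG_dom_iff inv_equality inv_inv inv_closed)
  qed
  have "\<beta> ` KG_dom G l = {1..n}"
  proof (rule card_subset_eq)
    show "\<beta> ` KG_dom G l \<subseteq> {1..n}" using \<beta>_in by blast
    have "card (KG_dom G l) = n"
      using n by (simp add: KG_dom_def card_cartesian_product order_def)
    then show "card (\<beta> ` KG_dom G l) = card {1..n}"
      using card_image[OF \<beta>_inj] by simp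
  qed simp
  then have "bij_betw \<beta> (KG_dom G l) {1..n}"
    using \<beta>_inj by (simp add: bij_betw_def)
  with equivariant that show thesis by blast
qed

lemma (in group) quasi_G_code_of_free_action:
  assumes fin: "finite (carrier G)" and n: "n = l * order G" and C: "linear_code n C"
    and H: "subgroup H (sym_group n)" "H \<subseteq> PAut n C"
    and \<phi>: "\<phi> \<in> iso G ((sym_group n)\<lparr>carrier := H\<rparr>)"
    and free: "acts_freely H n" and orbits: "card (perm_orbits H n) = l"
  shows "quasi_G_code G l C"
proof -
  obtain \<beta> where \<beta>: "bij_betw \<beta> (KG_dom G l) {1..n}"
    and equivariant: "\<And>h i x. \<lbrakk>h \<in> carrier G; i \<in> {1..l}; x \<in> carrier G\<rbrakk>
      \<Longrightarrow> \<phi> h (\<beta> (i, x)) = \<beta> (i, x \<otimes> inv h)"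
    using free_action_labelling[OF fin n H(1) \<phi> free orbits] by blast
  interpret coordinate_labelling G l n \<beta>
    using fin \<beta> by unfold_locales
  have \<phi>_H: "\<phi> h \<in> H" if "h \<in> carrier G" for h
    using \<phi> that by (auto simp: iso_iff hom_def)
  have "shift h = \<phi> (inv h)" if h: "h \<in> carrier G" for h
  proof (rule shift_unique[symmetric])
    show "\<phi> (inv h) permutes {1..n}"
      using \<phi>_H h subgroup.subset[OF H(1)] sym_group_carrier by blast
    show "\<And>i x. i \<in> {1..l} \<Longrightarrow> x \<in> carrier G \<Longrightarrow> \<phi> (inv h) (\<beta> (i, x)) = \<beta> (i, x \<otimes> h)"
      using h by (simp add: equivariant)
  qed (rule h)
  then have "\<forall>h\<in>carrier G. \<forall>v\<in>C. perm_vec v (shift h) \<in> C"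
    using \<phi>_H H(2) by (auto intro!: PAutD)
  then show ?thesis by (rule quasi_G_code_if_shift_invariant[OF n C])
qed

theorem mainTheorem1:
  fixes G :: "('g, 'm) monoid_scheme" and l n :: nat and C :: "(nat \<Rightarrow> 'k::{field, finite}) set"
  assumes "group G" and "finite (carrier G)" and "l \<ge> 1" and "n = l * order G"
    and "linear_code n C"
  shows "quasi_G_code G l C \<longleftrightarrow>
    (\<exists>H. subgroup H (sym_group n) \<and> H \<subseteq> PAut n C
       \<and> G \<cong> (sym_group n)\<lparr>carrier := H\<rparr>
       \<and> acts_freely H n \<and> card (perm_orbits H n) = l)"
proof
  assume "quasi_G_code G l C"
  then obtain \<beta> where \<beta>: "bij_betw \<beta> (KG_dom G l) {1..n}"
    and M: "right_KG_submodule G l ((\<lambda>v. restrict (\<lambda>p. v (\<beta> p)) (KG_dom G l)) ` C)"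
    using assms(4) unfolding quasi_G_code_def by blast
  interpret coordinate_labelling G l n \<beta>
    using assms(1,2) \<beta> by (simp add: coordinate_labelling_def coordinate_labelling_axioms_def)
  have "\<forall>h\<in>carrier G. \<forall>v\<in>C. perm_vec v (shift h) \<in> C"
    using M submodule_iff_shift_invariant[OF assms(5)] by (simp add: relabel_def[abs_def])
  then show "\<exists>H. subgroup H (sym_group n) \<and> H \<subseteq> PAut n C
       \<and> G \<cong> (sym_group n)\<lparr>carrier := H\<rparr>
       \<and> acts_freely H n \<and> card (perm_orbits H n) = l"
    using subgroup_shift_group shift_group_PAut iso_shift_group[OF assms(3)]
      acts_freely_shift_group card_orbits_shift_group by blast
next
  assume "\<exists>H. subgroup H (sym_group n) \<and> H \<subseteq> PAut n C
       \<and> G \<cong> (sym_group n)\<lparr>carrier := H\<rparr>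
       \<and> acts_freely H n \<and> card (perm_orbits H n) = l"
  then show "quasi_G_code G l C"
    using group.quasi_G_code_of_free_action[OF assms(1,2,4,5)] unfolding is_iso_def by blast
qed

end
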